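(* Let $K$ be a field and let $\vec a_{0,1},\dots,\vec a_{0,n},\vec a_{1,1},\dots,\vec a_{1,n}\in K^{n+1}$ satisfy: for every $\vec s=(s_1,\dots,s_n)\in\{0,1\}^n$ and every $k\in\{1,\dots,n\}$, the set $\{\vec a_{s_1,1},\dots,\vec a_{s_n,n},\vec a_{1-s_k,k}\}$ is linearly independent. For $\vec s\in\{0,1\}^n$ let $\vec x_{\vec s}$ be the solution of the equations $\hat a_{s_1,1}=\dots=\hat a_{s_n,n}=0$. If $\vec s\neq\vec r$, then $\vec x_{\vec s}\neq\vec x_{\vec r}$.
   Context: For $\vec a\in K^{n+1}$, $\hat a$ denotes the affine-linear function $\hat a(x_1,\dots,x_n)=\vec a\cdot\vec x$ with $\vec x=(x_1,\dots,x_n,1)$. *)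

theory Defs
  imports Main "HOL-Library.FuncSet"
begin

text \<open>Vectors of K^(n+1) are functions nat => K, coordinates 1..n+1 used.
  Points of K^n are extensional functions on {1..n}.\<close>

definition hat :: "nat \<Rightarrow> (nat \<Rightarrow> 'a::field) \<Rightarrow> (nat \<Rightarrow> 'a) \<Rightarrow> 'a" where
  "hat n a x = (\<Sum>i=1..n. a i * x i) + a (Suc n)"

definition lin_indep_fam :: "nat \<Rightarrow> nat set \<Rightarrow> (nat \<Rightarrow> nat \<Rightarrow> 'a::field) \<Rightarrow> bool" where
  "lin_indep_fam n I v \<longleftrightarrow>
     (\<forall>c. (\<forall>j\<in>{1..Suc n}. (\<Sum>i\<in>I. c i * v i j) = 0) \<longrightarrow> (\<forall>i\<in>I. c i = 0))"

definition solves :: "nat \<Rightarrow> (nat \<Rightarrow> nat \<Rightarrow> nat \<Rightarrow> 'a::field) \<Rightarrow> (nat \<Rightarrow> nat) \<Rightarrow> (nat \<Rightarrow> 'a) \<Rightarrow> bool" where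
  "solves n a s x \<longleftrightarrow> x \<in> {1..n} \<rightarrow>\<^sub>E UNIV \<and> (\<forall>i\<in>{1..n}. hat n (a (s i) i) x = 0)"

end

theory Submission
  imports Defs "Jordan_Normal_Form.Determinant"
begin

text \<open>If a point \<open>x\<close> solved both systems, choose \<open>k\<close> with \<open>s k \<noteq> r k\<close>. Then \<open>x\<close> is a
  common zero of the \<open>n + 1\<close> affine functions with coefficient vectors
  \<open>a (s 1) 1, \<dots>, a (s n) n, a (1 - s k) k\<close>, so the square matrix of these vectors annihilates
  the nonzero vector \<open>(x, 1)\<close>. Since its rows are linearly independent, so are the columns of
  its transpose; hence its determinant is nonzero, a contradiction.\<close>

definition coeff_mat :: "nat \<Rightarrow> (nat \<Rightarrow> nat \<Rightarrow> 'a) \<Rightarrow> 'a mat" where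
  "coeff_mat n v = mat (Suc n) (Suc n) (\<lambda>(i, j). v (Suc i) (Suc j))"

lemma coeff_mat_carrier: "coeff_mat n v \<in> carrier_mat (Suc n) (Suc n)"
  by (simp add: coeff_mat_def)

lemma coeff_mat_mult_vec:
  fixes v :: "nat \<Rightarrow> nat \<Rightarrow> 'a::comm_semiring_0"
  assumes "i < Suc n"
  shows "(coeff_mat n v *\<^sub>v vec (Suc n) (\<lambda>j. y (Suc j))) $ i = (\<Sum>j=1..Suc n. v (Suc i) j * y j)"
  using assms
  by (simp add: coeff_mat_def scalar_prod_def sum.atLeast1_atMost_eq atLeast0LessThan)

lemma transpose_coeff_mat_mult_vec:
  fixes v :: "nat \<Rightarrow> nat \<Rightarrow> 'a::comm_semiring_0"
  assumes "j < Suc n" and "c \<in> carrier_vec (Suc n)"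
  shows "(transpose_mat (coeff_mat n v) *\<^sub>v c) $ j = (\<Sum>i=1..Suc n. c $ (i - 1) * v i (Suc j))"
  using assms
  by (simp add: coeff_mat_def scalar_prod_def sum.atLeast1_atMost_eq atLeast0LessThan mult.commute)

lemma det_coeff_mat_nonzero:
  fixes v :: "nat \<Rightarrow> nat \<Rightarrow> 'a::field"
  assumes indep: "lin_indep_fam n {1..Suc n} v"
  shows "det (coeff_mat n v) \<noteq> 0"
proof
  let ?A = "coeff_mat n v"
  assume "det ?A = 0"
  then have "det (transpose_mat ?A) = 0"
    by (simp add: det_transpose[OF coeff_mat_carrier])
  then obtain c where c: "c \<in> carrier_vec (Suc n)" "c \<noteq> 0\<^sub>v (Suc n)"
      and kernel: "transpose_mat ?A *\<^sub>v c = 0\<^sub>v (Suc n)"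
    using det_0_iff_vec_prod_zero[of "transpose_mat ?A" "Suc n"] coeff_mat_carrier by auto
  have "\<forall>j\<in>{1..Suc n}. (\<Sum>i\<in>{1..Suc n}. c $ (i - 1) * v i j) = 0"
  proof
    fix j assume j: "j \<in> {1..Suc n}"
    then have "j - 1 < Suc n" and "Suc (j - 1) = j" by auto
    then show "(\<Sum>i\<in>{1..Suc n}. c $ (i - 1) * v i j) = 0"
      using transpose_coeff_mat_mult_vec[of "j - 1" n c v] kernel c(1) by (metis index_zero_vec(1))
  qed
  then have "\<forall>i\<in>{1..Suc n}. c $ (i - 1) = 0"
    using indep[unfolded lin_indep_fam_def, rule_format, of "\<lambda>i. c $ (i - 1)"] by blast
  then have "c = 0\<^sub>v (Suc n)"
  proof (intro eq_vecI)
    fix i assume zero: "\<forall>i\<in>{1..Suc n}. c $ (i - 1) = 0"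
      and "i < dim_vec (0\<^sub>v (Suc n) :: 'a vec)"
    with zero[rule_format, of "Suc i"] show "c $ i = 0\<^sub>v (Suc n) $ i" by simp
  qed (use c(1) in simp)
  with c(2) show False ..
qed

lemma lin_indep_fam_kernel_trivial:
  fixes v :: "nat \<Rightarrow> nat \<Rightarrow> 'a::field"
  assumes indep: "lin_indep_fam n {1..Suc n} v"
    and kernel: "\<forall>i\<in>{1..Suc n}. (\<Sum>j=1..Suc n. v i j * y j) = 0"
    and j: "j \<in> {1..Suc n}"
  shows "y j = 0"
proof -
  let ?y = "vec (Suc n) (\<lambda>j. y (Suc j))"
  have "coeff_mat n v *\<^sub>v ?y = 0\<^sub>v (Suc n)"
  proof (rule eq_vecI)
    fix i assume "i < dim_vec (0\<^sub>v (Suc n) :: 'a vec)"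
    with kernel show "(coeff_mat n v *\<^sub>v ?y) $ i = 0\<^sub>v (Suc n) $ i"
      by (simp add: coeff_mat_mult_vec)
  qed (simp add: coeff_mat_def)
  then have "?y = 0\<^sub>v (Suc n)"
    using det_0_iff_vec_prod_zero[OF coeff_mat_carrier] det_coeff_mat_nonzero[OF indep]
    by (metis vec_carrier)
  moreover have "j - 1 < Suc n" and "Suc (j - 1) = j" using j by auto
  ultimately show ?thesis by (metis index_vec index_zero_vec(1))
qed

lemma hat_eq_homogeneous_sum: "hat n w x = (\<Sum>j=1..Suc n. w j * (x(Suc n := 1)) j)"
  by (simp add: hat_def)

lemma lin_indep_fam_no_common_zero:
  fixes v :: "nat \<Rightarrow> nat \<Rightarrow> 'a::field"
  assumes "lin_indep_fam n {1..Suc n} v"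
  shows "\<exists>i\<in>{1..Suc n}. hat n (v i) x \<noteq> 0"
  using lin_indep_fam_kernel_trivial[OF assms, of "x(Suc n := 1)" "Suc n"]
  by (auto simp: hat_eq_homogeneous_sum)

theorem lemma5:
  fixes n :: nat and a :: "nat \<Rightarrow> nat \<Rightarrow> nat \<Rightarrow> 'a::field" and s r :: "nat \<Rightarrow> nat"
  assumes indep: "\<forall>t\<in>{1..n} \<rightarrow>\<^sub>E {0,1}. \<forall>k\<in>{1..n}.
      lin_indep_fam n {1..Suc n} (\<lambda>i. if i = Suc n then a (1 - t k) k else a (t i) i)"
    and unique_sol: "\<forall>t\<in>{1..n} \<rightarrow>\<^sub>E {0,1}. \<exists>!x. solves n a t x"
    and s: "s \<in> {1..n} \<rightarrow>\<^sub>E {0,1}" and r: "r \<in> {1..n} \<rightarrow>\<^sub>E {0,1}"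
    and "s \<noteq> r"
  shows "(THE x. solves n a s x) \<noteq> (THE x. solves n a r x)"
proof
  define x where "x = (THE x. solves n a s x)"
  assume "(THE x. solves n a s x) = (THE x. solves n a r x)"
  then have xs: "solves n a s x" and xr: "solves n a r x"
    unfolding x_def using unique_sol s r by (metis theI')+
  obtain k where k: "k \<in> {1..n}" "s k \<noteq> r k"
    using \<open>s \<noteq> r\<close> s r by (metis PiE_arb ext)
  moreover have "s k \<in> {0, 1}" and "r k \<in> {0, 1}"
    using s r k(1) by auto
  ultimately have "1 - s k = r k"
    by auto
  with xr k(1) have "hat n (a (1 - s k) k) x = 0"
    by (simp add: solves_def)
  moreover have "hat n (a (s i) i) x = 0" if "i \<in> {1..n}" for i
    using xs that by (simp add: solves_def)
  ultimately have "\<forall>i\<in>{1..Suc n}. hat n (if i = Suc n then a (1 - s k) k else a (s i) i) x = 0"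
    by (auto simp: le_Suc_eq)
  with lin_indep_fam_no_common_zero[OF indep[rule_format, OF s k(1)]] show False
    by auto
qed

end
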